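(* Let $\alpha$ be a unit speed Frenet curve in $\mathbb{E}^3$ and $\beta$ an osculating mate of $\alpha$ with binormal $\bar B$. The following are equivalent: (i) the binormal indicatrix $\bar B$ of $\beta$ is a general helix; (ii) $\beta$ is a slant helix; (iii) $\alpha$ is a general helix.
   Context: $\alpha:I\to\mathbb{E}^3$ is parametrized by arclength $s$, with Frenet frame $\{T,N,B\}$, curvature $\kappa>0$, torsion $\tau$. An osculating mate of $\alpha$ is a curve $\beta(s)=\int(x_1T+x_2N)ds$ with smooth $x_1,x_2$, $x_1^2+x_2^2=1$ and $\beta''\perp\mathrm{span}\{T,N\}$; $\beta$ is assumed to be a Frenet curve, unit speed in $s$, with Frenet frame $\{\bar T,\bar N,\bar B\}$. The binormal indicatrix of $\beta$ is the spherical curve $s\mapsto\bar B(s)$. A general helix is a curve whose tangent makes a constant angle with a fixed direction (equivalently torsion/curvature is constant). A slant helix is a curve whose principal normal makes a constant angle with a fixed direction (equivalently $\frac{k^2}{(k^2+t^2)^{3/2}}(t/k)'$ is constant, $k,t$ its curvature and torsion).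
   Formalization: The binormal indicatrix $\bar B$ of $\beta$ is also assumed regular, its derivative $\bar B'(s)$ being nonzero at every s in I, so the torsion of $\beta$ never vanishes. The paper assumes this as well. *)

theory Defs
  imports "HOL-Analysis.Analysis"
begin

definition frenet_frame ::
  "real set \<Rightarrow> (real \<Rightarrow> real^3) \<Rightarrow> (real \<Rightarrow> real^3) \<Rightarrow> (real \<Rightarrow> real^3) \<Rightarrow> (real \<Rightarrow> real^3)
   \<Rightarrow> (real \<Rightarrow> real) \<Rightarrow> (real \<Rightarrow> real) \<Rightarrow> bool" where
  "frenet_frame I c T N B k t \<longleftrightarrow>
     continuous_on I k \<and> continuous_on I t \<and>
     (\<forall>s\<in>I.
        (c has_vector_derivative T s) (at s) \<and>
        (T has_vector_derivative (k s *\<^sub>R N s)) (at s) \<and>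
        (N has_vector_derivative (- (k s) *\<^sub>R T s + t s *\<^sub>R B s)) (at s) \<and>
        (B has_vector_derivative (- (t s) *\<^sub>R N s)) (at s) \<and>
        norm (T s) = 1 \<and> norm (N s) = 1 \<and> T s \<bullet> N s = 0 \<and>
        B s = cross3 (T s) (N s) \<and> k s > 0)"

definition osculating_mate ::
  "real set \<Rightarrow> (real \<Rightarrow> real^3) \<Rightarrow> (real \<Rightarrow> real^3) \<Rightarrow> (real \<Rightarrow> real^3) \<Rightarrow> bool" where
  "osculating_mate I T N \<beta> \<longleftrightarrow>
     (\<exists>x1 x2 :: real \<Rightarrow> real.
        \<forall>s\<in>I. x1 differentiable (at s) \<and> x2 differentiable (at s) \<and>
              (x1 s)\<^sup>2 + (x2 s)\<^sup>2 = 1 \<and>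
              (\<beta> has_vector_derivative (x1 s *\<^sub>R T s + x2 s *\<^sub>R N s)) (at s) \<and>
              vector_derivative (\<lambda>r. vector_derivative \<beta> (at r)) (at s) \<bullet> T s = 0 \<and>
              vector_derivative (\<lambda>r. vector_derivative \<beta> (at r)) (at s) \<bullet> N s = 0)"

definition general_helix :: "real set \<Rightarrow> (real \<Rightarrow> real^3) \<Rightarrow> bool" where
  "general_helix I c \<longleftrightarrow>
     (\<exists>u a. norm u = 1 \<and>
        (\<forall>s\<in>I. c differentiable (at s) \<and> vector_derivative c (at s) \<noteq> 0 \<and>
               (vector_derivative c (at s) /\<^sub>R norm (vector_derivative c (at s))) \<bullet> u = a))"

definition slant_helix :: "real set \<Rightarrow> (real \<Rightarrow> real^3) \<Rightarrow> bool" where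
  "slant_helix I c \<longleftrightarrow>
     (\<exists>T N B k t. frenet_frame I c T N B k t \<and>
        (\<exists>u a. norm u = 1 \<and> (\<forall>s\<in>I. N s \<bullet> u = a)))"

end

theory Submission
  imports Defs
begin

text \<open>
  Since \<open>\<beta>'' = kb Nb\<close> is orthogonal to \<open>T\<close> and \<open>N\<close>, the principal normal \<open>Nb\<close> of the
  osculating mate is \<open>\<plusminus>B\<close>, with a sign that is constant by continuity. Then \<open>\<tau>\<close> never vanishes,
  for otherwise \<open>Nb' = -kb Tb + tb Bb\<close> would vanish. For a fixed direction \<open>u\<close>, \<open>T \<bullet> u\<close> is
  constant iff \<open>N \<bullet> u = 0\<close> (as \<open>\<kappa> > 0\<close>) iff \<open>B \<bullet> u\<close> is constant (as \<open>\<tau> \<noteq> 0\<close>). Hence each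
  of the three conditions says that \<open>Nb = \<plusminus>B\<close> makes a constant angle with a fixed direction:
  (iii) by the above, (ii) by uniqueness of the principal normal, and (i) because the unit
  tangent of \<open>Bb\<close> is \<open>-sgn(tb) Nb\<close>, where the sign is constant as \<open>tb\<close> is continuous and
  nowhere zero.
\<close>

definition inner_constant_on :: "real set \<Rightarrow> (real \<Rightarrow> 'a::real_inner) \<Rightarrow> 'a \<Rightarrow> bool" where
  "inner_constant_on I V u \<longleftrightarrow> (\<exists>a. \<forall>s\<in>I. V s \<bullet> u = a)"

definition constant_angle_on :: "real set \<Rightarrow> (real \<Rightarrow> 'a::real_inner) \<Rightarrow> bool" where
  "constant_angle_on I V \<longleftrightarrow> (\<exists>u. norm u = 1 \<and> inner_constant_on I V u)"

lemma constant_angle_on_cong: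
  assumes "\<And>u. inner_constant_on I V u \<longleftrightarrow> inner_constant_on I W u"
  shows "constant_angle_on I V \<longleftrightarrow> constant_angle_on I W"
  unfolding constant_angle_on_def using assms by simp

lemma inner_constant_on_scaled:
  assumes "c \<noteq> 0" and "\<And>s. s \<in> I \<Longrightarrow> V s = c *\<^sub>R W s"
  shows "inner_constant_on I V u \<longleftrightarrow> inner_constant_on I W u"
proof
  assume "inner_constant_on I V u"
  then obtain a where "\<forall>s\<in>I. c * (W s \<bullet> u) = a"
    using assms(2) unfolding inner_constant_on_def by auto
  then have "\<forall>s\<in>I. W s \<bullet> u = a / c"
    using assms(1) by (simp add: field_simps)
  then show "inner_constant_on I W u"
    unfolding inner_constant_on_def by blast
next
  assume "inner_constant_on I W u"
  then obtain a where "\<forall>s\<in>I. W s \<bullet> u = a"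
    unfolding inner_constant_on_def by blast
  then have "\<forall>s\<in>I. V s \<bullet> u = c * a"
    using assms(2) by simp
  then show "inner_constant_on I V u"
    unfolding inner_constant_on_def by blast
qed

lemma inner_constant_on_iff_orthogonal_derivative:
  assumes "open I" and "is_interval I"
    and deriv: "\<And>s. s \<in> I \<Longrightarrow> (V has_vector_derivative V' s) (at s)"
  shows "inner_constant_on I V u \<longleftrightarrow> (\<forall>s\<in>I. V' s \<bullet> u = 0)"
proof -
  have inner_deriv: "((\<lambda>r. V r \<bullet> u) has_real_derivative V' s \<bullet> u) (at s)" if "s \<in> I" for s
    using bounded_linear.has_vector_derivative[OF bounded_linear_inner_left deriv[OF that]]
    by (simp add: has_real_derivative_iff_has_vector_derivative)
  show ?thesis
  proof
    assume "inner_constant_on I V u"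
    then obtain a where a: "\<forall>s\<in>I. V s \<bullet> u = a"
      unfolding inner_constant_on_def by blast
    show "\<forall>s\<in>I. V' s \<bullet> u = 0"
    proof
      fix s assume s: "s \<in> I"
      have "((\<lambda>r. V r \<bullet> u) has_real_derivative 0) (at s)"
        by (rule has_field_derivative_transform_within_open[of "\<lambda>r. a" _ _ I])
          (use a s assms(1) in auto)
      with inner_deriv[OF s] show "V' s \<bullet> u = 0"
        by (rule DERIV_unique)
    qed
  next
    assume "\<forall>s\<in>I. V' s \<bullet> u = 0"
    then have "\<exists>a. \<forall>s\<in>I. V s \<bullet> u = a"
      using inner_deriv assms(2)
      by (intro has_field_derivative_zero_constant)
        (auto simp: is_interval_convex intro: has_field_derivative_at_within)
    then show "inner_constant_on I V u"
      unfolding inner_constant_on_def .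
  qed
qed

lemma connected_continuous_on_sign_constant:
  fixes f :: "real \<Rightarrow> real"
  assumes "connected S" and "continuous_on S f" and "f ` S \<subseteq> {-1, 1}"
  obtains c where "\<bar>c\<bar> = 1" and "\<And>x. x \<in> S \<Longrightarrow> f x = c"
proof (cases "S = {}")
  case False
  have "f constant_on S"
    using assms(1,2) finite_subset[OF assms(3)] by (rule continuous_finite_range_constant) simp
  then obtain c where c: "\<And>x. x \<in> S \<Longrightarrow> f x = c"
    unfolding constant_on_def by blast
  from False obtain x where "x \<in> S"
    by blast
  then have "\<bar>c\<bar> = 1"
    using assms(3) c by force
  then show ?thesis
    using c by (rule that)
qed (rule that[of 1]; simp)

lemma unit_orthogonal_to_orthonormal_pair:
  fixes T N v :: "real^3"
  assumes "norm T = 1" "norm N = 1" "T \<bullet> N = 0" "norm v = 1" "v \<bullet> T = 0" "v \<bullet> N = 0"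
  shows "v = (v \<bullet> cross3 T N) *\<^sub>R cross3 T N" and "v \<bullet> cross3 T N \<in> {-1, 1}"
proof -
  define B where "B = cross3 T N"
  have nB: "norm B = 1"
    using norm_cross_dot[of T N] assms(1-3) unfolding B_def by (simp add: abs_square_eq_1)
  have "cross3 B v = 0"
    unfolding B_def cross_skew[of _ v] Lagrange using assms(5,6) by (simp add: inner_commute)
  then have sq: "(v \<bullet> B)\<^sup>2 = 1"
    using norm_cross_dot[of B v] nB assms(4) by (simp add: inner_commute)
  then show "v \<bullet> cross3 T N \<in> {-1, 1}"
    unfolding B_def[symmetric] by (auto simp: power2_eq_1_iff)
  have "(norm (v - (v \<bullet> B) *\<^sub>R B))\<^sup>2 = (norm v)\<^sup>2 - 2 * (v \<bullet> B)\<^sup>2 + (v \<bullet> B)\<^sup>2 * (norm B)\<^sup>2"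
    unfolding power2_norm_eq_inner inner_diff_left inner_diff_right inner_scaleR_left inner_scaleR_right
    by (simp add: inner_commute[of B v] power2_eq_square algebra_simps)
  also have "\<dots> = 0"
    using sq nB assms(4) by simp
  finally show "v = (v \<bullet> cross3 T N) *\<^sub>R cross3 T N"
    unfolding B_def[symmetric] by simp
qed

lemma frenet_frameD:
  assumes "frenet_frame I c T N B k t" and "s \<in> I"
  shows "(c has_vector_derivative T s) (at s)"
    and "(T has_vector_derivative (k s *\<^sub>R N s)) (at s)"
    and "(N has_vector_derivative (- (k s) *\<^sub>R T s + t s *\<^sub>R B s)) (at s)"
    and "(B has_vector_derivative (- (t s) *\<^sub>R N s)) (at s)"
    and "norm (T s) = 1" and "norm (N s) = 1" and "T s \<bullet> N s = 0"
    and "B s = cross3 (T s) (N s)" and "k s > 0"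
  using assms unfolding frenet_frame_def by blast+

lemma frenet_frame_continuous_on:
  assumes "frenet_frame I c T N B k t"
  shows "continuous_on I N" and "continuous_on I B" and "continuous_on I t"
proof -
  show "continuous_on I N" "continuous_on I B"
    using frenet_frameD(3,4)[OF assms]
    by (auto intro!: continuous_at_imp_continuous_on has_vector_derivative_continuous)
  show "continuous_on I t"
    using assms unfolding frenet_frame_def by blast
qed

lemma frenet_frame_second_derivative:
  assumes "frenet_frame I c T N B k t" and "open I" and "s \<in> I"
  shows "vector_derivative (\<lambda>r. vector_derivative c (at r)) (at s) = k s *\<^sub>R N s"
proof -
  have tangent: "vector_derivative c (at r) = T r" if "r \<in> I" for r
    using frenet_frameD(1)[OF assms(1) that] by (rule vector_derivative_at)
  have "((\<lambda>r. vector_derivative c (at r)) has_vector_derivative k s *\<^sub>R N s) (at s)"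
    by (rule has_vector_derivative_transform_within_open[OF frenet_frameD(2)[OF assms(1,3)] assms(2,3)])
      (simp add: tangent)
  then show ?thesis
    by (rule vector_derivative_at)
qed

lemma frenet_frame_normal_unique:
  assumes "frenet_frame I c T N B k t" and "frenet_frame I c T' N' B' k' t'"
    and "open I" and "s \<in> I"
  shows "N' s = N s"
proof -
  have tangent: "T' r = T r" if "r \<in> I" for r
    using frenet_frameD(1)[OF assms(2) that] frenet_frameD(1)[OF assms(1) that]
    by (rule vector_derivative_unique_at)
  have "(T has_vector_derivative k' s *\<^sub>R N' s) (at s)"
    by (rule has_vector_derivative_transform_within_open[OF frenet_frameD(2)[OF assms(2,4)] assms(3,4)])
      (rule tangent)
  then have eq: "k' s *\<^sub>R N' s = k s *\<^sub>R N s"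
    using frenet_frameD(2)[OF assms(1,4)] by (rule vector_derivative_unique_at)
  then have "norm (k' s *\<^sub>R N' s) = norm (k s *\<^sub>R N s)"
    by simp
  then have "k' s = k s"
    using frenet_frameD(6,9)[OF assms(1,4)] frenet_frameD(6,9)[OF assms(2,4)] by simp
  with eq frenet_frameD(9)[OF assms(1,4)] show ?thesis
    by simp
qed

lemma frenet_inner_constant_tangent_iff_binormal:
  assumes "open I" and "is_interval I" and F: "frenet_frame I c T N B k t"
    and torsion: "\<And>s. s \<in> I \<Longrightarrow> t s \<noteq> 0"
  shows "inner_constant_on I T u \<longleftrightarrow> inner_constant_on I B u"
proof -
  have curvature: "k s \<noteq> 0" if "s \<in> I" for s
    using frenet_frameD(9)[OF F that] by simp
  have "inner_constant_on I T u \<longleftrightarrow> (\<forall>s\<in>I. (k s *\<^sub>R N s) \<bullet> u = 0)"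
    using assms(1,2) frenet_frameD(2)[OF F] by (rule inner_constant_on_iff_orthogonal_derivative)
  also have "\<dots> \<longleftrightarrow> (\<forall>s\<in>I. N s \<bullet> u = 0)"
    using curvature by simp
  also have "\<dots> \<longleftrightarrow> (\<forall>s\<in>I. (- t s *\<^sub>R N s) \<bullet> u = 0)"
    using torsion by simp
  also have "\<dots> \<longleftrightarrow> inner_constant_on I B u"
    using assms(1,2) frenet_frameD(4)[OF F]
    by (rule inner_constant_on_iff_orthogonal_derivative[symmetric])
  finally show ?thesis .
qed

lemma general_helix_iff_constant_angle_on:
  assumes "\<And>s. s \<in> I \<Longrightarrow> (c has_vector_derivative c' s) (at s)"
    and "\<And>s. s \<in> I \<Longrightarrow> c' s \<noteq> 0"
    and "\<And>s. s \<in> I \<Longrightarrow> sgn (c' s) = W s"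
  shows "general_helix I c \<longleftrightarrow> constant_angle_on I W"
proof -
  have "c differentiable (at s) \<and> vector_derivative c (at s) \<noteq> 0 \<and>
        vector_derivative c (at s) /\<^sub>R norm (vector_derivative c (at s)) = W s" if "s \<in> I" for s
    using assms[OF that] vector_derivative_at[OF assms(1)[OF that]]
    by (auto simp: sgn_div_norm intro: differentiableI_vector)
  then show ?thesis
    unfolding general_helix_def constant_angle_on_def inner_constant_on_def
    by (metis (no_types, lifting))
qed

lemma frenet_frame_general_helix_iff:
  assumes "frenet_frame I c T N B k t"
  shows "general_helix I c \<longleftrightarrow> constant_angle_on I T"
proof (rule general_helix_iff_constant_angle_on)
  fix s assume s: "s \<in> I"
  show "(c has_vector_derivative T s) (at s)"
    using assms s by (rule frenet_frameD(1))
  show "T s \<noteq> 0" and "sgn (T s) = T s"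
    using frenet_frameD(5)[OF assms s] by (auto simp: sgn_div_norm)
qed

lemma slant_helix_iff_constant_angle_normal:
  assumes F: "frenet_frame I c T N B k t" and "open I"
  shows "slant_helix I c \<longleftrightarrow> constant_angle_on I N"
proof
  assume "slant_helix I c"
  then obtain T' N' B' k' t' where F': "frenet_frame I c T' N' B' k' t'"
    and "constant_angle_on I N'"
    unfolding slant_helix_def constant_angle_on_def inner_constant_on_def by blast
  moreover have "N' s = N s" if "s \<in> I" for s
    using F F' assms(2) that by (rule frenet_frame_normal_unique)
  ultimately show "constant_angle_on I N"
    unfolding constant_angle_on_def inner_constant_on_def by simp
next
  assume "constant_angle_on I N"
  with F show "slant_helix I c"
    unfolding slant_helix_def constant_angle_on_def inner_constant_on_def by blast
qed

lemma general_helix_binormal_indicatrix_iff: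
  assumes "is_interval I" and F: "frenet_frame I c T N B k t"
    and regular: "\<And>s. s \<in> I \<Longrightarrow> vector_derivative B (at s) \<noteq> 0"
  shows "general_helix I B \<longleftrightarrow> constant_angle_on I N"
proof -
  have torsion: "t s \<noteq> 0" if "s \<in> I" for s
    using regular[OF that] vector_derivative_at[OF frenet_frameD(4)[OF F that]] by auto
  have "continuous_on I (\<lambda>s. sgn (t s))"
    using frenet_frame_continuous_on(3)[OF F] torsion by (intro continuous_on_sgn) auto
  moreover have "(\<lambda>s. sgn (t s)) ` I \<subseteq> {-1, 1}"
    using torsion by (auto simp: sgn_real_def)
  ultimately obtain \<sigma> where \<sigma>: "\<bar>\<sigma>\<bar> = 1" and sgn_t: "\<And>s. s \<in> I \<Longrightarrow> sgn (t s) = \<sigma>"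
    by (rule connected_continuous_on_sign_constant[OF is_interval_connected[OF assms(1)]]) blast
  have "general_helix I B \<longleftrightarrow> constant_angle_on I (\<lambda>s. - \<sigma> *\<^sub>R N s)"
  proof (rule general_helix_iff_constant_angle_on)
    fix s assume s: "s \<in> I"
    show "(B has_vector_derivative - t s *\<^sub>R N s) (at s)"
      using F s by (rule frenet_frameD(4))
    show "- t s *\<^sub>R N s \<noteq> 0"
      using torsion[OF s] frenet_frameD(6)[OF F s] by auto
    show "sgn (- t s *\<^sub>R N s) = - \<sigma> *\<^sub>R N s"
      using sgn_t[OF s] frenet_frameD(6)[OF F s] by (simp add: sgn_scaleR sgn_div_norm)
  qed
  also have "\<dots> \<longleftrightarrow> constant_angle_on I N"
    using \<sigma> by (intro constant_angle_on_cong inner_constant_on_scaled[of "- \<sigma>"]) auto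
  finally show ?thesis .
qed

lemma osculating_mate_normal_eq_binormal:
  assumes "open I" and "is_interval I"
    and F: "frenet_frame I \<alpha> T N B \<kappa> \<tau>" and Fb: "frenet_frame I \<beta> Tb Nb Bb kb tb"
    and "osculating_mate I T N \<beta>"
  obtains c where "\<bar>c\<bar> = 1" and "\<And>s. s \<in> I \<Longrightarrow> Nb s = c *\<^sub>R B s"
proof -
  have mate: "\<forall>s\<in>I.
      vector_derivative (\<lambda>r. vector_derivative \<beta> (at r)) (at s) \<bullet> T s = 0 \<and>
      vector_derivative (\<lambda>r. vector_derivative \<beta> (at r)) (at s) \<bullet> N s = 0"
    using assms(5) unfolding osculating_mate_def by blast
  have orth: "Nb s \<bullet> T s = 0 \<and> Nb s \<bullet> N s = 0" if s: "s \<in> I" for s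
  proof -
    have "(kb s *\<^sub>R Nb s) \<bullet> T s = 0 \<and> (kb s *\<^sub>R Nb s) \<bullet> N s = 0"
      using bspec[OF mate s] unfolding frenet_frame_second_derivative[OF Fb assms(1) s] .
    then show ?thesis
      using frenet_frameD(9)[OF Fb s] by simp
  qed
  have Nb_eq: "Nb s = (Nb s \<bullet> B s) *\<^sub>R B s" and sign: "Nb s \<bullet> B s \<in> {-1, 1}" if s: "s \<in> I" for s
    using unit_orthogonal_to_orthonormal_pair[of "T s" "N s" "Nb s"] orth[OF s]
      frenet_frameD(5-8)[OF F s] frenet_frameD(6)[OF Fb s] by simp_all
  have "continuous_on I (\<lambda>s. Nb s \<bullet> B s)"
    using frenet_frame_continuous_on(1)[OF Fb] frenet_frame_continuous_on(2)[OF F]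
    by (rule continuous_on_inner)
  moreover have "(\<lambda>s. Nb s \<bullet> B s) ` I \<subseteq> {-1, 1}"
    using sign by blast
  ultimately obtain c where "\<bar>c\<bar> = 1" and "\<And>s. s \<in> I \<Longrightarrow> Nb s \<bullet> B s = c"
    by (rule connected_continuous_on_sign_constant[OF is_interval_connected[OF assms(2)]]) blast
  with Nb_eq that show ?thesis
    by metis
qed

lemma normal_eq_binormal_torsion_nonzero:
  assumes "open I"
    and F: "frenet_frame I \<alpha> T N B \<kappa> \<tau>" and Fb: "frenet_frame I \<beta> Tb Nb Bb kb tb"
    and Nb: "\<And>r. r \<in> I \<Longrightarrow> Nb r = c *\<^sub>R B r" and s: "s \<in> I"
  shows "\<tau> s \<noteq> 0"
proof
  assume "\<tau> s = 0"
  have "((\<lambda>r. c *\<^sub>R B r) has_vector_derivative c *\<^sub>R (- \<tau> s *\<^sub>R N s)) (at s)"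
    using frenet_frameD(4)[OF F s]
    by (rule bounded_linear.has_vector_derivative[OF bounded_linear_scaleR_right])
  then have "(Nb has_vector_derivative c *\<^sub>R (- \<tau> s *\<^sub>R N s)) (at s)"
    by (rule has_vector_derivative_transform_within_open[OF _ assms(1) s]) (simp add: Nb)
  then have "- kb s *\<^sub>R Tb s + tb s *\<^sub>R Bb s = 0"
    using frenet_frameD(3)[OF Fb s] \<open>\<tau> s = 0\<close> vector_derivative_unique_at by fastforce
  then have "(- kb s *\<^sub>R Tb s + tb s *\<^sub>R Bb s) \<bullet> Tb s = 0"
    by simp
  moreover have "Tb s \<bullet> Tb s = 1"
    using frenet_frameD(5)[OF Fb s] by (simp add: norm_eq_1)
  moreover have "Bb s \<bullet> Tb s = 0"
    using frenet_frameD(8)[OF Fb s] dot_cross_self(1)[of "Tb s"] by (simp add: inner_commute)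
  ultimately have "kb s = 0"
    by (simp add: inner_diff_left)
  with frenet_frameD(9)[OF Fb s] show False
    by simp
qed

theorem theorem16:
  fixes \<alpha> \<beta> T N B Tb Nb Bb :: "real \<Rightarrow> real^3"
    and \<kappa> \<tau> kb tb :: "real \<Rightarrow> real" and I :: "real set"
  assumes "open I" and "is_interval I" and "I \<noteq> {}"
    and "frenet_frame I \<alpha> T N B \<kappa> \<tau>"
    and "frenet_frame I \<beta> Tb Nb Bb kb tb"
    and "osculating_mate I T N \<beta>"
    and "\<forall>s\<in>I. vector_derivative Bb (at s) \<noteq> 0"
  shows "(general_helix I Bb \<longleftrightarrow> slant_helix I \<beta>) \<and>
         (slant_helix I \<beta> \<longleftrightarrow> general_helix I \<alpha>)"
proof -
  obtain c where c: "\<bar>c\<bar> = 1" and Nb: "\<And>s. s \<in> I \<Longrightarrow> Nb s = c *\<^sub>R B s"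
    by (rule osculating_mate_normal_eq_binormal[OF assms(1,2,4-6)]) blast
  have torsion: "\<tau> s \<noteq> 0" if "s \<in> I" for s
    using normal_eq_binormal_torsion_nonzero[OF assms(1,4,5) Nb that] .
  have "constant_angle_on I Nb \<longleftrightarrow> constant_angle_on I B"
    using c Nb by (intro constant_angle_on_cong inner_constant_on_scaled[of c]) auto
  also have "\<dots> \<longleftrightarrow> constant_angle_on I T"
    using frenet_inner_constant_tangent_iff_binormal[OF assms(1,2,4) torsion]
    by (intro constant_angle_on_cong) simp
  finally have "constant_angle_on I Nb \<longleftrightarrow> constant_angle_on I T" .
  moreover have "general_helix I Bb \<longleftrightarrow> constant_angle_on I Nb"
    using assms(2,5,7) by (intro general_helix_binormal_indicatrix_iff) auto
  moreover have "slant_helix I \<beta> \<longleftrightarrow> constant_angle_on I Nb"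
    using assms(5,1) by (rule slant_helix_iff_constant_angle_normal)
  moreover have "general_helix I \<alpha> \<longleftrightarrow> constant_angle_on I T"
    using assms(4) by (rule frenet_frame_general_helix_iff)
  ultimately show ?thesis
    by blast
qed

end
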